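(* There is a function $l:\mathbb{N}\to\mathbb{N}$ such that for every $m$ and every graph $G$, every equivalence class of $\cong_m$ on $V(G)$ is a union of connected components of the graph of $\cong^D_{l(m)}$ on $V(G)$.
   Context: Graphs are finite, simple, undirected, loopless, possibly labelled with unary predicates from a finite set. $N(u)$ is the neighbourhood of $u$ and $D(u,v):=N(u)\,\Delta\,N(v)$. $u\cong_m v$ means Duplicator wins the standard $m$-round Ehrenfeucht–Fraïssé game on $(G,u)$ and $(G,v)$ (equivalently, $u,v$ satisfy the same FO formulas of quantifier rank $m$). Differential game from $(\bar a,\bar b)$ on a single graph $G$: in each round, with current tuples $(a_1,\dots,a_n),(b_1,\dots,b_n)$, Spoiler chooses $i\le n$ and $v\in D(a_i,b_i)$ and declares whether $v$ becomes $a_{n+1}$ or $b_{n+1}$ (if all $D(a_i,b_i)$ are empty, Duplicator wins); Duplicator answers with a vertex $w\in D(a_i,b_i)$ (same $i$), which becomes the other of $b_{n+1},a_{n+1}$. After the rounds, Duplicator wins iff $a_i\mapsto b_i$ is a label-preserving isomorphism between the induced subgraphs on the $a$'s and $b$'s (equalities, adjacencies, labels preserved). $u\cong^D_m v$ means Duplicator has a winning strategy in the $m$-round differential game from $((u),(v))$. The graph of this relation has vertex set $V(G)$ and an edge between distinct $u,v$ iff $u\cong^D_m v$. *)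

theory Defs
  imports Main
begin

text \<open>Vertices are natural numbers (every finite graph is
isomorphic to one of this form); each vertex carries the set of unary labels it satisfies,
labels being drawn from a finite set of label names (natural numbers).\<close>

record graph =
  verts :: "nat set"
  adj   :: "nat \<Rightarrow> nat \<Rightarrow> bool"
  lab   :: "nat \<Rightarrow> nat set"

definition wf_graph :: "graph \<Rightarrow> bool" where
  "wf_graph G \<longleftrightarrow> finite (verts G)
     \<and> (\<forall>x y. adj G x y \<longrightarrow> x \<in> verts G \<and> y \<in> verts G)
     \<and> (\<forall>x y. adj G x y \<longrightarrow> adj G y x)
     \<and> (\<forall>x. \<not> adj G x x)
     \<and> finite (\<Union>v\<in>verts G. lab G v)"

definition nbhd :: "graph \<Rightarrow> nat \<Rightarrow> nat set" where
  "nbhd G u = {w \<in> verts G. adj G u w}"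

definition Dset :: "graph \<Rightarrow> nat \<Rightarrow> nat \<Rightarrow> nat set" where
  "Dset G u v = (nbhd G u - nbhd G v) \<union> (nbhd G v - nbhd G u)"

text \<open>The map as!i \<mapsto> bs!i is a label-preserving isomorphism of induced subgraphs.\<close>
definition partial_iso :: "graph \<Rightarrow> nat list \<Rightarrow> nat list \<Rightarrow> bool" where
  "partial_iso G as bs \<longleftrightarrow> length as = length bs
     \<and> (\<forall>i<length as. \<forall>j<length as.
           (as!i = as!j \<longleftrightarrow> bs!i = bs!j) \<and> (adj G (as!i) (as!j) \<longleftrightarrow> adj G (bs!i) (bs!j)))
     \<and> (\<forall>i<length as. lab G (as!i) = lab G (bs!i))"

fun ef_win :: "graph \<Rightarrow> nat \<Rightarrow> nat list \<Rightarrow> nat list \<Rightarrow> bool" where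
  "ef_win G 0 as bs = partial_iso G as bs"
| "ef_win G (Suc m) as bs =
     ((\<forall>a\<in>verts G. \<exists>b\<in>verts G. ef_win G m (as @ [a]) (bs @ [b]))
    \<and> (\<forall>b\<in>verts G. \<exists>a\<in>verts G. ef_win G m (as @ [a]) (bs @ [b])))"

definition ef_equiv :: "graph \<Rightarrow> nat \<Rightarrow> nat \<Rightarrow> nat \<Rightarrow> bool" where
  "ef_equiv G m u v \<longleftrightarrow> ef_win G m [u] [v]"

text \<open>Duplicator wins the differential game with m rounds left from (as, bs).
If all D(a_i,b_i) are empty the game ends and the final winning condition is evaluated.\<close>
fun diff_win :: "graph \<Rightarrow> nat \<Rightarrow> nat list \<Rightarrow> nat list \<Rightarrow> bool" where
  "diff_win G 0 as bs = partial_iso G as bs"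
| "diff_win G (Suc m) as bs =
     (if (\<forall>i<length as. Dset G (as!i) (bs!i) = {}) then partial_iso G as bs
      else (\<forall>i<length as. \<forall>x\<in>Dset G (as!i) (bs!i).
              (\<exists>w\<in>Dset G (as!i) (bs!i). diff_win G m (as @ [x]) (bs @ [w]))
            \<and> (\<exists>w\<in>Dset G (as!i) (bs!i). diff_win G m (as @ [w]) (bs @ [x]))))"

definition diff_equiv :: "graph \<Rightarrow> nat \<Rightarrow> nat \<Rightarrow> nat \<Rightarrow> bool" where
  "diff_equiv G m u v \<longleftrightarrow> diff_win G m [u] [v]"

definition diff_graph_edge :: "graph \<Rightarrow> nat \<Rightarrow> nat \<Rightarrow> nat \<Rightarrow> bool" where
  "diff_graph_edge G m u v \<longleftrightarrow> u \<in> verts G \<and> v \<in> verts G \<and> u \<noteq> v \<and> diff_equiv G m u v"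

definition same_component :: "graph \<Rightarrow> nat \<Rightarrow> nat \<Rightarrow> nat \<Rightarrow> bool" where
  "same_component G m u v \<longleftrightarrow> u \<in> verts G \<and> v \<in> verts G \<and> (diff_graph_edge G m)\<^sup>*\<^sup>* u v"

end

theory Submission
  imports Defs
begin

text \<open>Duplicator plays the EF game on (G, u), (G, v) by maintaining a winning position P of the
differential game from ((u), (v)). An EF move x that occurs in P is already answered, and one
that lies in a D-set of P is a differential move, answered by the differential strategy. A fresh
x is answered by x itself, or by u if x = v: the new pair has an empty D-set or the D-set of a
pair of P, so any differential play from the enlarged position is a play from P, and (x, x)
resp. (v, u) stays consistent as long as x is not touched by it; once x is touched, x is answered
as before. Simulating this costs k + 1 rounds on top of the k that are kept, so 2^m - 1
differential rounds suffice for m EF rounds, and the components follow since \<cong>_m is an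
equivalence.\<close>

lemma Dset_commute: "Dset G a b = Dset G b a"
  unfolding Dset_def by blast

lemma Dset_subset_verts: "Dset G a b \<subseteq> verts G"
  unfolding Dset_def nbhd_def by blast

lemma mem_Dset_iff: "wf_graph G \<Longrightarrow> z \<in> Dset G a b \<longleftrightarrow> adj G a z \<noteq> adj G b z"
  unfolding Dset_def nbhd_def wf_graph_def by auto

lemma adj_commute: "wf_graph G \<Longrightarrow> adj G a b \<longleftrightarrow> adj G b a"
  unfolding wf_graph_def by blast

definition pair_iso :: "graph \<Rightarrow> (nat \<times> nat) set \<Rightarrow> bool" where
  "pair_iso G S \<longleftrightarrow> (\<forall>a b a' b'. (a, b) \<in> S \<longrightarrow> (a', b') \<in> S \<longrightarrow>
     lab G a = lab G b \<and> (a = a' \<longleftrightarrow> b = b') \<and> (adj G a a' \<longleftrightarrow> adj G b b'))"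

lemma pair_iso_mono: "S \<subseteq> T \<Longrightarrow> pair_iso G T \<Longrightarrow> pair_iso G S"
  unfolding pair_iso_def by blast

lemma pair_iso_eq_iff:
  "pair_iso G S \<Longrightarrow> (a, b) \<in> S \<Longrightarrow> (a', b') \<in> S \<Longrightarrow> a = a' \<longleftrightarrow> b = b'"
  unfolding pair_iso_def by blast

lemma pair_iso_swap: "pair_iso G (prod.swap ` S) \<longleftrightarrow> pair_iso G S"
  unfolding pair_iso_def by auto

lemma pair_iso_insertI:
  assumes wf: "wf_graph G" and iso: "pair_iso G S" and lab: "lab G a = lab G b"
    and new: "\<And>a' b'. (a', b') \<in> S \<Longrightarrow> (a = a' \<longleftrightarrow> b = b') \<and> (adj G a a' \<longleftrightarrow> adj G b b')"
  shows "pair_iso G (insert (a, b) S)"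
  unfolding pair_iso_def
proof (intro allI impI)
  fix c d c' d' assume "(c, d) \<in> insert (a, b) S" "(c', d') \<in> insert (a, b) S"
  moreover have "\<not> adj G a a" "\<not> adj G b b" using wf unfolding wf_graph_def by blast+
  ultimately show "lab G c = lab G d \<and> (c = c' \<longleftrightarrow> d = d') \<and> (adj G c c' \<longleftrightarrow> adj G d d')"
    using iso lab new[of c' d'] new[of c d] adj_commute[OF wf] unfolding pair_iso_def by auto
qed

lemma ball_set_zip_iff:
  "length as = length bs \<Longrightarrow> (\<forall>(a, b)\<in>set (zip as bs). P a b) \<longleftrightarrow> (\<forall>i<length as. P (as ! i) (bs ! i))"
  using list_all2_iff[of P as bs] list_all2_conv_all_nth[of P as bs] by simp

lemma partial_iso_iff_pair_iso:
  assumes len: "length as = length bs"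
  shows "partial_iso G as bs \<longleftrightarrow> pair_iso G (set (zip as bs))"
proof -
  have mem: "(a, b) \<in> set (zip as bs) \<longleftrightarrow> (\<exists>i<length as. a = as ! i \<and> b = bs ! i)" for a b
    using len by (auto simp: in_set_zip)
  show ?thesis
  proof
    assume "partial_iso G as bs"
    then show "pair_iso G (set (zip as bs))" unfolding partial_iso_def pair_iso_def mem by auto
  next
    assume iso: "pair_iso G (set (zip as bs))"
    have "lab G (as ! i) = lab G (bs ! i) \<and> (as ! i = as ! j \<longleftrightarrow> bs ! i = bs ! j)
        \<and> (adj G (as ! i) (as ! j) \<longleftrightarrow> adj G (bs ! i) (bs ! j))"
      if "i < length as" "j < length as" for i j
      using iso that unfolding pair_iso_def mem by blast
    then show "partial_iso G as bs" using len unfolding partial_iso_def by blast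
  qed
qed

text \<open>Positions of the differential game are kept as sets of pairs (a_i, b_i): the order and
repetitions of the tuples do not matter. The early end of the game when all D(a_i, b_i) are empty
needs no clause of its own, since Spoiler then has no move and \<open>diff_answers\<close> holds vacuously.\<close>

definition diff_answers :: "graph \<Rightarrow> ((nat \<times> nat) set \<Rightarrow> bool) \<Rightarrow> (nat \<times> nat) set \<Rightarrow> bool" where
  "diff_answers G P S \<longleftrightarrow> (\<forall>(a, b)\<in>S. \<forall>x\<in>Dset G a b.
     (\<exists>w\<in>Dset G a b. P (insert (x, w) S)) \<and> (\<exists>w\<in>Dset G a b. P (insert (w, x) S)))"

lemma diff_answersD:
  assumes "diff_answers G P S" "(a, b) \<in> S" "x \<in> Dset G a b"
  shows "\<exists>w\<in>Dset G a b. P (insert (x, w) S)" "\<exists>w\<in>Dset G a b. P (insert (w, x) S)"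
  using assms unfolding diff_answers_def by auto

lemma diff_answers_mono:
  "diff_answers G P S \<Longrightarrow> (\<And>T. P T \<Longrightarrow> Q T) \<Longrightarrow> diff_answers G Q S"
  unfolding diff_answers_def by blast

lemma diff_answers_swap:
  "diff_answers G P S \<Longrightarrow> diff_answers G (\<lambda>T. P (prod.swap ` T)) (prod.swap ` S)"
  unfolding diff_answers_def by (force simp: Dset_commute image_image)

lemma diff_answers_insert:
  assumes answers: "diff_answers G P Q"
    and D: "Dset G x c = {} \<or> (\<exists>(a, b)\<in>Q. Dset G x c = Dset G a b)"
    and step: "\<And>a b y w. (a, b) \<in> Q \<Longrightarrow> y \<in> Dset G a b \<Longrightarrow> w \<in> Dset G a b \<Longrightarrow>
      P (insert (y, w) Q) \<Longrightarrow> P' (insert (y, w) (insert (x, c) Q))"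
  shows "diff_answers G P' (insert (x, c) Q)"
  unfolding diff_answers_def
proof (intro ballI, clarify)
  fix a b y assume ab: "(a, b) \<in> insert (x, c) Q" and y: "y \<in> Dset G a b"
  obtain a' b' where ab': "(a', b') \<in> Q" "Dset G a' b' = Dset G a b"
    using ab y D by auto
  then have y': "y \<in> Dset G a' b'" using y by simp
  obtain w1 where w1: "w1 \<in> Dset G a' b'" "P (insert (y, w1) Q)"
    using diff_answersD(1)[OF answers ab'(1) y'] by blast
  obtain w2 where w2: "w2 \<in> Dset G a' b'" "P (insert (w2, y) Q)"
    using diff_answersD(2)[OF answers ab'(1) y'] by blast
  show "(\<exists>w\<in>Dset G a b. P' (insert (y, w) (insert (x, c) Q)))
      \<and> (\<exists>w\<in>Dset G a b. P' (insert (w, y) (insert (x, c) Q)))"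
    using step[OF ab'(1) y' w1] step[OF ab'(1) w2(1) y' w2(2)] w1(1) w2(1) ab'(2) by blast
qed

fun diff_win_pairs :: "graph \<Rightarrow> nat \<Rightarrow> (nat \<times> nat) set \<Rightarrow> bool" where
  "diff_win_pairs G 0 S \<longleftrightarrow> pair_iso G S"
| "diff_win_pairs G (Suc k) S \<longleftrightarrow> pair_iso G S \<and> diff_answers G (diff_win_pairs G k) S"

lemma diff_win_pairs_pair_iso: "diff_win_pairs G k S \<Longrightarrow> pair_iso G S"
  by (cases k) auto

lemma diff_win_pairs_SucD: "diff_win_pairs G (Suc k) S \<Longrightarrow> diff_win_pairs G k S"
  by (induction k arbitrary: S) (auto elim: diff_answers_mono)

lemma diff_win_pairs_le: "diff_win_pairs G k S \<Longrightarrow> j \<le> k \<Longrightarrow> diff_win_pairs G j S"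
  by (induction k) (auto simp: le_Suc_eq simp del: diff_win_pairs.simps dest: diff_win_pairs_SucD)

lemma diff_answers_pair_iso:
  assumes "diff_answers G (diff_win_pairs G k) S" "(a, b) \<in> S" "Dset G a b \<noteq> {}"
  shows "pair_iso G S"
proof -
  obtain x where "x \<in> Dset G a b" using assms(3) by blast
  then obtain w where "diff_win_pairs G k (insert (x, w) S)"
    using diff_answersD(1)[OF assms(1,2)] by blast
  then show ?thesis by (blast intro: pair_iso_mono dest: diff_win_pairs_pair_iso)
qed

lemma diff_win_iff_diff_win_pairs:
  "length as = length bs \<Longrightarrow> diff_win G k as bs \<longleftrightarrow> diff_win_pairs G k (set (zip as bs))"
proof (induction k arbitrary: as bs)
  case 0
  then show ?case by (simp add: partial_iso_iff_pair_iso)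
next
  case (Suc k)
  let ?S = "set (zip as bs)"
  have IH: "diff_win G k (as @ [x]) (bs @ [w]) \<longleftrightarrow> diff_win_pairs G k (insert (x, w) ?S)" for x w
    using Suc by simp
  have answers: "(\<forall>i<length as. \<forall>x\<in>Dset G (as ! i) (bs ! i).
        (\<exists>w\<in>Dset G (as ! i) (bs ! i). diff_win G k (as @ [x]) (bs @ [w]))
      \<and> (\<exists>w\<in>Dset G (as ! i) (bs ! i). diff_win G k (as @ [w]) (bs @ [x])))
    \<longleftrightarrow> diff_answers G (diff_win_pairs G k) ?S"
    unfolding IH diff_answers_def ball_set_zip_iff[OF Suc.prems] ..
  have empty: "(\<forall>i<length as. Dset G (as ! i) (bs ! i) = {}) \<longleftrightarrow> (\<forall>(a, b)\<in>?S. Dset G a b = {})"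
    using ball_set_zip_iff[OF Suc.prems] by simp
  show ?case
    using answers empty diff_answers_pair_iso[of G k ?S]
    by (auto simp: partial_iso_iff_pair_iso[OF Suc.prems] diff_answers_def)
qed

lemma diff_win_pairs_swap: "diff_win_pairs G k S \<Longrightarrow> diff_win_pairs G k (prod.swap ` S)"
proof (induction k arbitrary: S)
  case (Suc k)
  have "diff_answers G (\<lambda>T. diff_win_pairs G k (prod.swap ` T)) (prod.swap ` S)"
    using Suc.prems by (simp add: diff_answers_swap)
  then have "diff_answers G (diff_win_pairs G k) (prod.swap ` S)"
    by (rule diff_answers_mono) (drule Suc.IH, simp add: image_image)
  with Suc.prems show ?case by (simp add: pair_iso_swap)
qed (simp add: pair_iso_swap)

lemma diff_win_pairs_Dset_iff:
  assumes win: "diff_win_pairs G (Suc k) S" and ab: "(a, b) \<in> S" and zz': "(z, z') \<in> S"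
  shows "z \<in> Dset G a b \<longleftrightarrow> z' \<in> Dset G a b"
proof
  have answers: "diff_answers G (diff_win_pairs G k) S" using win by simp
  assume "z \<in> Dset G a b"
  then obtain w where "w \<in> Dset G a b" "diff_win_pairs G k (insert (z, w) S)"
    using diff_answersD(1)[OF answers ab] by blast
  moreover from this have "w = z'"
    using pair_iso_eq_iff[OF diff_win_pairs_pair_iso, of G k "insert (z, w) S" z w z z'] zz' by simp
  ultimately show "z' \<in> Dset G a b" by simp
next
  have answers: "diff_answers G (diff_win_pairs G k) S" using win by simp
  assume "z' \<in> Dset G a b"
  then obtain w where "w \<in> Dset G a b" "diff_win_pairs G k (insert (w, z') S)"
    using diff_answersD(2)[OF answers ab] by blast
  moreover from this have "w = z"
    using pair_iso_eq_iff[OF diff_win_pairs_pair_iso, of G k "insert (w, z') S" w z' z z'] zz' by simp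
  ultimately show "z \<in> Dset G a b" by simp
qed

definition Dset_pairs :: "graph \<Rightarrow> (nat \<times> nat) set \<Rightarrow> nat set" where
  "Dset_pairs G S = (\<Union>(a, b)\<in>S. Dset G a b)"

lemma Dset_pairs_mono: "S \<subseteq> T \<Longrightarrow> Dset_pairs G S \<subseteq> Dset_pairs G T"
  unfolding Dset_pairs_def by blast

text \<open>The pairs Duplicator creates: differential moves (both entries in D-sets), answers x to a
fresh EF move x, and the answer u to v.\<close>

definition admissible :: "graph \<Rightarrow> nat \<Rightarrow> nat \<Rightarrow> (nat \<times> nat) set \<Rightarrow> bool" where
  "admissible G u v P \<longleftrightarrow> P \<subseteq> verts G \<times> verts G \<and>
     (\<forall>a b. (a, b) \<in> P \<longrightarrow>
        a = b \<or> (a, b) \<in> {(u, v), (v, u)} \<or> a \<in> Dset_pairs G P \<and> b \<in> Dset_pairs G P)"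

lemma admissible_insert:
  assumes "admissible G u v P" "a \<in> verts G" "b \<in> verts G" "a = b \<or> (a, b) \<in> {(u, v), (v, u)}"
  shows "admissible G u v (insert (a, b) P)"
  using assms Dset_pairs_mono[of P "insert (a, b) P" G] unfolding admissible_def by blast

lemma admissible_insert_answer:
  assumes "admissible G u v P" "(a, b) \<in> P" "x \<in> Dset G a b" "w \<in> Dset G a b"
  shows "admissible G u v (insert (x, w) P)"
proof -
  have "x \<in> Dset_pairs G (insert (x, w) P)" "w \<in> Dset_pairs G (insert (x, w) P)"
    using assms(2-4) unfolding Dset_pairs_def by blast+
  then show ?thesis
    using assms Dset_subset_verts Dset_pairs_mono[of P "insert (x, w) P" G]
    unfolding admissible_def by blast
qed

lemma admissible_swap: "admissible G u v P \<Longrightarrow> admissible G v u (prod.swap ` P)"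
  unfolding admissible_def Dset_pairs_def by (auto simp: Dset_commute)

definition answerable :: "graph \<Rightarrow> nat \<Rightarrow> nat \<Rightarrow> nat \<Rightarrow> (nat \<times> nat) set \<Rightarrow> nat \<Rightarrow> bool" where
  "answerable G u v k P x \<longleftrightarrow>
     (\<exists>P'. P \<subseteq> P' \<and> admissible G u v P' \<and> diff_win_pairs G k P' \<and> x \<in> fst ` P')"

lemma answerable_if_played:
  assumes adm: "admissible G u v P" and win: "diff_win_pairs G K P" and "k < K"
    and x: "x \<in> fst ` P \<union> Dset_pairs G P"
  shows "answerable G u v k P x"
proof (cases "x \<in> fst ` P")
  case True
  then show ?thesis
    using adm diff_win_pairs_le[OF win] \<open>k < K\<close> unfolding answerable_def by auto
next
  case False
  then obtain a b where ab: "(a, b) \<in> P" "x \<in> Dset G a b"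
    using x unfolding Dset_pairs_def by blast
  obtain K' where K: "K = Suc K'" "k \<le> K'" using \<open>k < K\<close> by (cases K) auto
  have "diff_answers G (diff_win_pairs G K') P" using win K(1) by simp
  then obtain w where w: "w \<in> Dset G a b" "diff_win_pairs G K' (insert (x, w) P)"
    using diff_answersD(1)[OF _ ab] by blast
  then show ?thesis
    using admissible_insert_answer[OF adm ab w(1)] diff_win_pairs_le[OF w(2) K(2)]
    unfolding answerable_def by (intro exI[of _ "insert (x, w) P"]) auto
qed

lemma diff_win_pairs_insert_if_unanswerable:
  assumes iso: "\<And>Q. P \<subseteq> Q \<Longrightarrow> admissible G u v Q \<Longrightarrow> diff_win_pairs G 1 Q \<Longrightarrow>
      x \<notin> fst ` Q \<union> Dset_pairs G Q \<Longrightarrow> pair_iso G (insert (x, c) Q)"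
    and D: "Dset G x c = {} \<or> (\<exists>(a, b)\<in>P. Dset G x c = Dset G a b)"
    and "P \<subseteq> Q" "admissible G u v Q" "diff_win_pairs G (k + r + 1) Q"
    and "\<not> answerable G u v k Q x"
  shows "diff_win_pairs G r (insert (x, c) Q)"
proof -
  have iso_insert: "pair_iso G (insert (x, c) Q)"
    if "P \<subseteq> Q" "admissible G u v Q" "diff_win_pairs G (k + r + 1) Q" "\<not> answerable G u v k Q x"
    for Q r
  proof -
    have "x \<notin> fst ` Q \<union> Dset_pairs G Q"
      using answerable_if_played[OF that(2,3), of k x] that(4) by auto
    then show ?thesis using iso[OF that(1,2) diff_win_pairs_le[OF that(3)]] by simp
  qed
  show ?thesis
    using assms(3-)
  proof (induction r arbitrary: Q)
    case 0
    then show ?case using iso_insert[of Q 0] by (simp del: diff_win_pairs.simps(2))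
  next
    case (Suc r)
    have "diff_answers G (diff_win_pairs G r) (insert (x, c) Q)"
    proof (rule diff_answers_insert)
      show "diff_answers G (diff_win_pairs G (k + r + 1)) Q" using Suc.prems(3) by simp
      show "Dset G x c = {} \<or> (\<exists>(a, b)\<in>Q. Dset G x c = Dset G a b)" using D Suc.prems(1) by blast
    next
      fix a b y w
      assume "(a, b) \<in> Q" "y \<in> Dset G a b" "w \<in> Dset G a b"
        and win: "diff_win_pairs G (k + r + 1) (insert (y, w) Q)"
      have "diff_win_pairs G r (insert (x, c) (insert (y, w) Q))"
      proof (rule Suc.IH)
        show "P \<subseteq> insert (y, w) Q" using Suc.prems(1) by blast
        show "admissible G u v (insert (y, w) Q)"
          using admissible_insert_answer[OF Suc.prems(2)] \<open>(a, b) \<in> Q\<close> \<open>y \<in> Dset G a b\<close> \<open>w \<in> Dset G a b\<close> .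
        show "\<not> answerable G u v k (insert (y, w) Q) x"
          using Suc.prems(4) unfolding answerable_def by blast
      qed (rule win)
      then show "diff_win_pairs G r (insert (y, w) (insert (x, c) Q))" by (simp add: insert_commute)
    qed
    with iso_insert[OF Suc.prems] show ?case by simp
  qed
qed

lemma pair_iso_insert_diag:
  assumes wf: "wf_graph G" and adm: "admissible G u v Q" and uv: "(u, v) \<in> Q"
    and iso: "pair_iso G Q" and fresh: "x \<notin> fst ` Q \<union> Dset_pairs G Q" and "x \<noteq> v"
  shows "pair_iso G (insert (x, x) Q)"
proof (rule pair_iso_insertI[OF wf iso refl])
  fix a b assume ab: "(a, b) \<in> Q"
  have "x \<noteq> a" using fresh ab by force
  moreover have "u \<in> fst ` Q" using uv by force
  then have "x \<noteq> b"
    using adm ab fresh \<open>x \<noteq> v\<close> \<open>x \<noteq> a\<close> unfolding admissible_def by auto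
  moreover have "x \<notin> Dset G a b" using fresh ab unfolding Dset_pairs_def by blast
  then have "adj G x a \<longleftrightarrow> adj G x b" using mem_Dset_iff[OF wf] adj_commute[OF wf] by blast
  ultimately show "(x = a \<longleftrightarrow> x = b) \<and> (adj G x a \<longleftrightarrow> adj G x b)" by simp
qed

lemma pair_iso_insert_swap:
  assumes wf: "wf_graph G" and adm: "admissible G u v Q" and uv: "(u, v) \<in> Q"
    and win: "diff_win_pairs G 1 Q" and fresh: "v \<notin> fst ` Q \<union> Dset_pairs G Q"
  shows "pair_iso G (insert (v, u) Q)"
proof -
  have iso: "pair_iso G Q" using win by (rule diff_win_pairs_pair_iso)
  have win': "diff_win_pairs G (Suc 0) Q" using win by simp
  have "u \<in> fst ` Q" using uv by force
  then have "u \<noteq> v" using fresh by blast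
  have u_fresh: "u \<notin> Dset_pairs G Q"
    using fresh diff_win_pairs_Dset_iff[OF win' _ uv] unfolding Dset_pairs_def by blast
  show ?thesis
  proof (rule pair_iso_insertI[OF wf iso])
    show "lab G v = lab G u" using iso uv unfolding pair_iso_def by blast
  next
    fix a b assume ab: "(a, b) \<in> Q"
    have "v \<noteq> a" using fresh ab by force
    moreover have "(u, u) \<notin> Q" using pair_iso_eq_iff[OF iso uv] \<open>u \<noteq> v\<close> by blast
    then have "u \<noteq> b"
      using adm ab fresh u_fresh \<open>u \<noteq> v\<close> \<open>v \<noteq> a\<close> unfolding admissible_def by auto
    moreover have "adj G u a \<longleftrightarrow> adj G v b" using iso uv ab unfolding pair_iso_def by blast
    moreover have "a \<in> Dset G u v \<longleftrightarrow> b \<in> Dset G u v"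
      using diff_win_pairs_Dset_iff[OF win' uv ab] .
    ultimately show "(v = a \<longleftrightarrow> u = b) \<and> (adj G v a \<longleftrightarrow> adj G u b)"
      using mem_Dset_iff[OF wf] by auto
  qed
qed

lemma answerable_if_consistent_answer:
  assumes adm: "admissible G u v P" and win: "diff_win_pairs G (2 * k + 1) P"
    and adm': "admissible G u v (insert (x, c) P)"
    and iso: "\<And>Q. P \<subseteq> Q \<Longrightarrow> admissible G u v Q \<Longrightarrow> diff_win_pairs G 1 Q \<Longrightarrow>
      x \<notin> fst ` Q \<union> Dset_pairs G Q \<Longrightarrow> pair_iso G (insert (x, c) Q)"
    and D: "Dset G x c = {} \<or> (\<exists>(a, b)\<in>P. Dset G x c = Dset G a b)"
  shows "answerable G u v k P x"
proof (rule ccontr)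
  assume unanswerable: "\<not> answerable G u v k P x"
  have "diff_win_pairs G k (insert (x, c) P)"
    using diff_win_pairs_insert_if_unanswerable[OF iso D _ adm _ unanswerable] win
    by (simp add: mult_2)
  then have "answerable G u v k P x"
    using adm' unfolding answerable_def by (intro exI[of _ "insert (x, c) P"]) auto
  with unanswerable show False by contradiction
qed

lemma answerable_if_diff_win_pairs:
  assumes wf: "wf_graph G" and adm: "admissible G u v P" and uv: "(u, v) \<in> P"
    and win: "diff_win_pairs G (2 * k + 1) P" and x: "x \<in> verts G"
  shows "answerable G u v k P x"
proof (cases "x \<in> fst ` P \<union> Dset_pairs G P")
  case True
  then show ?thesis using answerable_if_played[OF adm win] by simp
next
  case fresh: False
  have "u \<in> fst ` P" "v \<in> snd ` P" using uv by force+
  show ?thesis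
  proof (cases "x \<in> snd ` P")
    case False
    show ?thesis
    proof (rule answerable_if_consistent_answer[OF adm win])
      show "admissible G u v (insert (x, x) P)" using admissible_insert[OF adm x x] by simp
      show "pair_iso G (insert (x, x) Q)"
        if "P \<subseteq> Q" "admissible G u v Q" "diff_win_pairs G 1 Q" "x \<notin> fst ` Q \<union> Dset_pairs G Q" for Q
        using pair_iso_insert_diag[OF wf that(2) _ diff_win_pairs_pair_iso[OF that(3)] that(4)]
          that(1) uv \<open>v \<in> snd ` P\<close> False by blast
    qed (simp add: Dset_def)
  next
    case True
    have "x = v" using True fresh \<open>u \<in> fst ` P\<close> adm unfolding admissible_def by force
    show ?thesis
    proof (rule answerable_if_consistent_answer[OF adm win])
      show "admissible G u v (insert (x, u) P)"
        using admissible_insert[OF adm x] adm uv \<open>x = v\<close> unfolding admissible_def by blast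
      show "pair_iso G (insert (x, u) Q)"
        if "P \<subseteq> Q" "admissible G u v Q" "diff_win_pairs G 1 Q" "x \<notin> fst ` Q \<union> Dset_pairs G Q" for Q
        using pair_iso_insert_swap[OF wf that(2) _ that(3)] that(1,4) uv \<open>x = v\<close> by blast
      show "Dset G x u = {} \<or> (\<exists>(a, b)\<in>P. Dset G x u = Dset G a b)"
        using uv \<open>x = v\<close> Dset_commute by blast
    qed
  qed
qed

lemma answerable_snd_if_diff_win_pairs:
  assumes wf: "wf_graph G" and adm: "admissible G u v P" and uv: "(u, v) \<in> P"
    and win: "diff_win_pairs G (2 * k + 1) P" and x: "x \<in> verts G"
  shows "\<exists>P'. P \<subseteq> P' \<and> admissible G u v P' \<and> diff_win_pairs G k P' \<and> x \<in> snd ` P'"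
proof -
  have "answerable G v u k (prod.swap ` P) x"
    using answerable_if_diff_win_pairs[OF wf admissible_swap[OF adm] _ diff_win_pairs_swap[OF win] x] uv
    by force
  then obtain P' where "prod.swap ` P \<subseteq> P'" "admissible G v u P'" "diff_win_pairs G k P'" "x \<in> fst ` P'"
    unfolding answerable_def by blast
  then show ?thesis
    using admissible_swap diff_win_pairs_swap
    by (intro exI[of _ "prod.swap ` P'"]) (auto simp: image_image image_mono[of _ _ prod.swap])
qed

lemma ef_win_if_diff_win_pairs:
  assumes wf: "wf_graph G"
  shows "admissible G u v P \<Longrightarrow> (u, v) \<in> P \<Longrightarrow> diff_win_pairs G (2 ^ n - 1) P \<Longrightarrow> set E \<subseteq> P
    \<Longrightarrow> ef_win G n (map fst E) (map snd E)"
proof (induction n arbitrary: P E)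
  case 0
  then show ?case
    using partial_iso_iff_pair_iso[of "map fst E" "map snd E" G] pair_iso_mono
    by (simp add: zip_map_fst_snd)
next
  case (Suc n)
  have "2 ^ Suc n - 1 = 2 * (2 ^ n - 1) + (1::nat)"
    using one_le_power[of "2::nat" n] by (simp only: power_Suc) linarith
  then have win: "diff_win_pairs G (2 * (2 ^ n - 1) + 1) P"
    using Suc.prems(3) by simp
  have extend: "ef_win G n (map fst E @ [a]) (map snd E @ [b]) \<and> a \<in> verts G \<and> b \<in> verts G"
    if "P \<subseteq> P'" "admissible G u v P'" "diff_win_pairs G (2 ^ n - 1) P'" "(a, b) \<in> P'" for P' a b
    using Suc.IH[of P' "E @ [(a, b)]"] that Suc.prems(2,4) unfolding admissible_def by auto
  show ?case
  proof (simp only: ef_win.simps, intro conjI ballI)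
    fix a assume "a \<in> verts G"
    then obtain P' where P': "P \<subseteq> P'" "admissible G u v P'" "diff_win_pairs G (2 ^ n - 1) P'" "a \<in> fst ` P'"
      using answerable_if_diff_win_pairs[OF wf Suc.prems(1,2) win] unfolding answerable_def by blast
    then obtain b where "(a, b) \<in> P'" by force
    then show "\<exists>b\<in>verts G. ef_win G n (map fst E @ [a]) (map snd E @ [b])"
      using extend[OF P'(1-3)] by blast
  next
    fix b assume "b \<in> verts G"
    then obtain P' where P': "P \<subseteq> P'" "admissible G u v P'" "diff_win_pairs G (2 ^ n - 1) P'" "b \<in> snd ` P'"
      using answerable_snd_if_diff_win_pairs[OF wf Suc.prems(1,2) win] by blast
    then obtain a where "(a, b) \<in> P'" by force
    then show "\<exists>a\<in>verts G. ef_win G n (map fst E @ [a]) (map snd E @ [b])"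
      using extend[OF P'(1-3)] by blast
  qed
qed

lemma ef_win_refl: "ef_win G m as as"
  by (induction m arbitrary: as) (auto simp: partial_iso_def)

lemma ef_win_trans: "ef_win G m as bs \<Longrightarrow> ef_win G m bs cs \<Longrightarrow> ef_win G m as cs"
proof (induction m arbitrary: as bs cs)
  case 0
  then show ?case unfolding ef_win.simps partial_iso_def by auto
next
  case (Suc m)
  show ?case
    unfolding ef_win.simps
  proof (intro conjI ballI)
    fix a assume "a \<in> verts G"
    then obtain b c where "ef_win G m (as @ [a]) (bs @ [b])" "c \<in> verts G" "ef_win G m (bs @ [b]) (cs @ [c])"
      using Suc.prems by force
    then show "\<exists>c\<in>verts G. ef_win G m (as @ [a]) (cs @ [c])" using Suc.IH by blast
  next
    fix c assume "c \<in> verts G"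
    then obtain a b where "a \<in> verts G" "ef_win G m (as @ [a]) (bs @ [b])" "ef_win G m (bs @ [b]) (cs @ [c])"
      using Suc.prems by force
    then show "\<exists>a\<in>verts G. ef_win G m (as @ [a]) (cs @ [c])" using Suc.IH by blast
  qed
qed

lemma ef_equiv_if_diff_equiv:
  assumes "wf_graph G" "u \<in> verts G" "v \<in> verts G" "diff_equiv G (2 ^ m - 1) u v"
  shows "ef_equiv G m u v"
proof -
  have "admissible G u v {(u, v)}" using assms(2,3) unfolding admissible_def by blast
  moreover have "diff_win_pairs G (2 ^ m - 1) {(u, v)}"
    using assms(4) diff_win_iff_diff_win_pairs[of "[u]" "[v]"] unfolding diff_equiv_def by simp
  ultimately show ?thesis
    using ef_win_if_diff_win_pairs[OF assms(1), of u v _ m "[(u, v)]"] unfolding ef_equiv_def by simp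
qed

theorem lemma6p1:
  shows "\<exists>l :: nat \<Rightarrow> nat. \<forall>m G. wf_graph G \<longrightarrow>
           (\<forall>u v. same_component G (l m) u v \<longrightarrow> ef_equiv G m u v)"
proof (intro exI[of _ "\<lambda>m. 2 ^ m - 1"] allI impI)
  fix m G u v
  assume wf: "wf_graph G" and "same_component G (2 ^ m - 1) u v"
  then have "(diff_graph_edge G (2 ^ m - 1))\<^sup>*\<^sup>* u v" unfolding same_component_def by blast
  then show "ef_equiv G m u v"
  proof (induction rule: rtranclp_induct)
    case base
    show ?case unfolding ef_equiv_def by (rule ef_win_refl)
  next
    case (step y z)
    then have "ef_equiv G m y z" using ef_equiv_if_diff_equiv[OF wf] unfolding diff_graph_edge_def by blast
    with step.IH show ?case unfolding ef_equiv_def by (rule ef_win_trans)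
  qed
qed

end
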